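(* For every $n\ge2$, $$|\mathcal{B}_n(321)|=C(n)-C(n-1)=\frac{3}{n+1}\binom{2n-2}{n-2},$$ where $C(m)=\frac{1}{m+1}\binom{2m}{m}$ is the $m$-th Catalan number.
   Context: A ballot permutation is a $\pi\in\mathfrak{S}_n$ such that every prefix $\pi_1\cdots\pi_i$ has at most as many descents ($\pi_j>\pi_{j+1}$) as ascents ($\pi_j<\pi_{j+1}$); $\mathcal{B}_n$ denotes the set of them. A permutation avoids the pattern $\sigma\in\mathfrak{S}_k$ if it has no subsequence order-isomorphic to $\sigma$; $\mathcal{B}_n(\sigma)$ is the set of $\sigma$-avoiding elements of $\mathcal{B}_n$. *)

theory Defs
  imports Complex_Main
begin

definition perms :: "nat \<Rightarrow> nat list set" where
  "perms n = {xs. distinct xs \<and> set xs = {1..n}}"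

text \<open>Number of ascents / descents of the prefix of length i
  (positions j with j+1 < i, 0-indexed).\<close>
definition asc_pref :: "nat list \<Rightarrow> nat \<Rightarrow> nat" where
  "asc_pref xs i = card {j. j + 1 < i \<and> xs ! j < xs ! (j + 1)}"

definition des_pref :: "nat list \<Rightarrow> nat \<Rightarrow> nat" where
  "des_pref xs i = card {j. j + 1 < i \<and> xs ! j > xs ! (j + 1)}"

definition ballot :: "nat list \<Rightarrow> bool" where
  "ballot xs \<longleftrightarrow> (\<forall>i. 1 \<le> i \<and> i \<le> length xs \<longrightarrow> des_pref xs i \<le> asc_pref xs i)"

definition contains :: "nat list \<Rightarrow> nat list \<Rightarrow> bool" where
  "contains xs sigma \<longleftrightarrow>
     (\<exists>f. (\<forall>a b. a < b \<and> b < length sigma \<longrightarrow> f a < f b)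
        \<and> (\<forall>a < length sigma. f a < length xs)
        \<and> (\<forall>a < length sigma. \<forall>b < length sigma.
              (xs ! f a < xs ! f b \<longleftrightarrow> sigma ! a < sigma ! b)))"

definition avoids :: "nat list \<Rightarrow> nat list \<Rightarrow> bool" where
  "avoids xs sigma \<longleftrightarrow> \<not> contains xs sigma"

definition ballot_avoiding :: "nat \<Rightarrow> nat list \<Rightarrow> nat list set" where
  "ballot_avoiding n sigma = {xs \<in> perms n. ballot xs \<and> avoids xs sigma}"

definition catalan :: "nat \<Rightarrow> real" where
  "catalan m = (real ((2 * m) choose m)) / real (m + 1)"

end

theory Submission
  imports Defs
begin

text \<open>
  In a 321-avoiding permutation every descent at a position j > 0 is preceded by an ascent at
  position j - 1, since otherwise three consecutive entries form a 321. Hence a 321-avoider is a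
  ballot permutation exactly when it starts with an ascent. A 321-avoider of [n] starting with a
  descent must have 1 in second position (a later 1 would complete a 321), and deleting this 1
  gives a bijection onto the 321-avoiders of [n-1]. Since the 321-avoiders of [n] are counted by
  the Catalan number C(n), the ballot ones number C(n) - C(n-1).

  The Catalan count comes from inserting the maximum n+1 into a 321-avoider of [n]: the result
  avoids 321 iff everything after the inserted entry is increasing. Refining by the position from
  which a permutation is increasing yields the recursion of Catalan's triangle.
\<close>

fun avoids_321 :: "nat list \<Rightarrow> bool" where
  "avoids_321 [] = True"
| "avoids_321 (x # xs) \<longleftrightarrow> avoids_321 xs \<and> sorted (filter (\<lambda>y. y < x) xs)"

definition has_321 :: "nat list \<Rightarrow> bool" where
  "has_321 xs \<longleftrightarrow>
     (\<exists>i j k. i < j \<and> j < k \<and> k < length xs \<and> xs ! j < xs ! i \<and> xs ! k < xs ! j)"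

lemma ex_index_pair_Cons:
  "(\<exists>j k. j < k \<and> k < length (b # ys) \<and> P ((b # ys) ! j) ((b # ys) ! k)) \<longleftrightarrow>
   (\<exists>y\<in>set ys. P b y) \<or> (\<exists>j k. j < k \<and> k < length ys \<and> P (ys ! j) (ys ! k))"
proof
  assume "\<exists>j k. j < k \<and> k < length (b # ys) \<and> P ((b # ys) ! j) ((b # ys) ! k)"
  then obtain j k where jk: "j < k" "k < length (b # ys)" "P ((b # ys) ! j) ((b # ys) ! k)"
    by blast
  then obtain k' where k: "k = Suc k'" by (cases k) auto
  show "(\<exists>y\<in>set ys. P b y) \<or> (\<exists>j k. j < k \<and> k < length ys \<and> P (ys ! j) (ys ! k))"
  proof (cases j)
    case 0
    then show ?thesis using jk k nth_mem[of k' ys] by auto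
  next
    case (Suc j')
    then show ?thesis using jk k by auto
  qed
next
  assume "(\<exists>y\<in>set ys. P b y) \<or> (\<exists>j k. j < k \<and> k < length ys \<and> P (ys ! j) (ys ! k))"
  then show "\<exists>j k. j < k \<and> k < length (b # ys) \<and> P ((b # ys) ! j) ((b # ys) ! k)"
  proof
    assume "\<exists>y\<in>set ys. P b y"
    then obtain k where "k < length ys" "P b (ys ! k)" by (auto simp: in_set_conv_nth)
    then show ?thesis by (intro exI[of _ 0] exI[of _ "Suc k"]) auto
  next
    assume "\<exists>j k. j < k \<and> k < length ys \<and> P (ys ! j) (ys ! k)"
    then obtain j k where "j < k" "k < length ys" "P (ys ! j) (ys ! k)" by blast
    then show ?thesis by (intro exI[of _ "Suc j"] exI[of _ "Suc k"]) auto
  qed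
qed

lemma ex_index_triple_Cons:
  "(\<exists>i j k. i < j \<and> j < k \<and> k < length (b # ys) \<and>
      P ((b # ys) ! i) ((b # ys) ! j) ((b # ys) ! k)) \<longleftrightarrow>
   (\<exists>j k. j < k \<and> k < length ys \<and> P b (ys ! j) (ys ! k)) \<or>
   (\<exists>i j k. i < j \<and> j < k \<and> k < length ys \<and> P (ys ! i) (ys ! j) (ys ! k))"
proof
  assume "\<exists>i j k. i < j \<and> j < k \<and> k < length (b # ys) \<and>
    P ((b # ys) ! i) ((b # ys) ! j) ((b # ys) ! k)"
  then obtain i j k where ijk: "i < j" "j < k" "k < length (b # ys)"
    "P ((b # ys) ! i) ((b # ys) ! j) ((b # ys) ! k)" by blast
  then obtain j' k' where "j = Suc j'" "k = Suc k'" by (cases j; cases k) auto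
  then show "(\<exists>j k. j < k \<and> k < length ys \<and> P b (ys ! j) (ys ! k)) \<or>
    (\<exists>i j k. i < j \<and> j < k \<and> k < length ys \<and> P (ys ! i) (ys ! j) (ys ! k))"
    using ijk by (cases i) auto
next
  assume "(\<exists>j k. j < k \<and> k < length ys \<and> P b (ys ! j) (ys ! k)) \<or>
    (\<exists>i j k. i < j \<and> j < k \<and> k < length ys \<and> P (ys ! i) (ys ! j) (ys ! k))"
  then show "\<exists>i j k. i < j \<and> j < k \<and> k < length (b # ys) \<and>
    P ((b # ys) ! i) ((b # ys) ! j) ((b # ys) ! k)"
  proof
    assume "\<exists>j k. j < k \<and> k < length ys \<and> P b (ys ! j) (ys ! k)"
    then obtain j k where "j < k" "k < length ys" "P b (ys ! j) (ys ! k)" by blast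
    then show ?thesis by (intro exI[of _ 0] exI[of _ "Suc j"] exI[of _ "Suc k"]) auto
  next
    assume "\<exists>i j k. i < j \<and> j < k \<and> k < length ys \<and> P (ys ! i) (ys ! j) (ys ! k)"
    then obtain i j k where "i < j" "j < k" "k < length ys" "P (ys ! i) (ys ! j) (ys ! k)"
      by blast
    then show ?thesis by (intro exI[of _ "Suc i"] exI[of _ "Suc j"] exI[of _ "Suc k"]) auto
  qed
qed

lemma sorted_filter_less_iff:
  "sorted (filter (\<lambda>y. y < x) xs) \<longleftrightarrow>
   \<not> (\<exists>j k. j < k \<and> k < length xs \<and> xs ! j < x \<and> xs ! k < xs ! j)"
proof (induction xs)
  case Nil
  then show ?case by simp
next
  case (Cons b ys)
  then show ?case
    using ex_index_pair_Cons[of b ys "\<lambda>u v. u < x \<and> v < u"] by (auto simp: not_le)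
qed

lemma avoids_321_iff_not_has_321: "avoids_321 xs \<longleftrightarrow> \<not> has_321 xs"
proof (induction xs)
  case Nil
  then show ?case by (simp add: has_321_def)
next
  case (Cons b ys)
  then show ?case
    using ex_index_triple_Cons[of b ys "\<lambda>u v w. v < u \<and> w < v"] sorted_filter_less_iff[of b ys]
    unfolding has_321_def by auto
qed

lemma contains_321_iff_has_321: "contains xs [3, 2, 1] \<longleftrightarrow> has_321 xs"
proof
  assume "contains xs [3, 2, 1]"
  then obtain f where mono: "\<forall>a b. a < b \<and> b < length [3, 2, 1::nat] \<longrightarrow> f a < f b"
    and bound: "\<forall>a < length [3, 2, 1::nat]. f a < length xs"
    and iso: "\<forall>a < length [3, 2, 1::nat]. \<forall>b < length [3, 2, 1::nat].
      xs ! f a < xs ! f b \<longleftrightarrow> [3, 2, 1::nat] ! a < [3, 2, 1] ! b"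
    unfolding contains_def by blast
  have "f 0 < f 1" "f 1 < f 2" "f 2 < length xs" using mono bound by auto
  moreover have "xs ! f 1 < xs ! f 0" "xs ! f 2 < xs ! f 1"
    using iso[rule_format, of 1 0] iso[rule_format, of 2 1] by simp_all
  ultimately show "has_321 xs" unfolding has_321_def by blast
next
  assume "has_321 xs"
  then obtain i j k where ijk: "i < j" "j < k" "k < length xs" "xs ! j < xs ! i" "xs ! k < xs ! j"
    unfolding has_321_def by blast
  define f where "f a = (if a = 0 then i else if a = 1 then j else k)" for a :: nat
  have three: "a < length [3, 2, 1::nat] \<Longrightarrow> a = 0 \<or> a = 1 \<or> a = 2" for a by auto
  show "contains xs [3, 2, 1]"
    unfolding contains_def
  proof (intro exI[of _ f] conjI allI impI)
    fix a b :: nat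
    assume "a < b \<and> b < length [3, 2, 1::nat]"
    then show "f a < f b" using three[of a] three[of b] ijk by (auto simp: f_def)
  next
    fix a :: nat
    assume "a < length [3, 2, 1::nat]"
    then show "f a < length xs" using three[of a] ijk by (auto simp: f_def)
  next
    fix a b :: nat
    assume "a < length [3, 2, 1::nat]" "b < length [3, 2, 1::nat]"
    then show "xs ! f a < xs ! f b \<longleftrightarrow> [3, 2, 1::nat] ! a < [3, 2, 1] ! b"
      using three[of a] three[of b] ijk by (auto simp: f_def)
  qed
qed

definition Av321 :: "nat \<Rightarrow> nat list set" where
  "Av321 n = {xs \<in> perms n. avoids_321 xs}"

definition Av321_sorted_from :: "nat \<Rightarrow> nat \<Rightarrow> nat list set" where
  "Av321_sorted_from n j = {xs \<in> Av321 n. sorted (drop j xs)}"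

lemma mem_Av321: "xs \<in> Av321 n \<longleftrightarrow> distinct xs \<and> set xs = {1..n} \<and> avoids_321 xs"
  by (simp add: Av321_def perms_def)

lemma length_Av321: "xs \<in> Av321 n \<Longrightarrow> length xs = n"
  unfolding mem_Av321 using distinct_card by fastforce

lemma finite_Av321: "finite (Av321 n)"
proof (rule finite_subset)
  show "Av321 n \<subseteq> {xs. set xs \<subseteq> {1..n} \<and> length xs = n}"
    using length_Av321 mem_Av321 by blast
  show "finite {xs. set xs \<subseteq> {1..n} \<and> length xs = n}"
    by (rule finite_lists_length_eq) simp
qed

lemma Av321_sorted_from_eq_Av321: "n \<le> Suc j \<Longrightarrow> Av321_sorted_from n j = Av321 n"
  unfolding Av321_sorted_from_def using length_Av321 by (auto intro: sorted01)

definition insert_at :: "'a \<Rightarrow> nat \<Rightarrow> 'a list \<Rightarrow> 'a list" where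
  "insert_at x p xs = take p xs @ x # drop p xs"

lemma set_insert_at: "set (insert_at x p xs) = insert x (set xs)"
proof -
  have "set xs = set (take p xs) \<union> set (drop p xs)" by (metis set_append append_take_drop_id)
  then show ?thesis by (auto simp: insert_at_def)
qed

lemma distinct_insert_at: "distinct (insert_at x p xs) \<longleftrightarrow> x \<notin> set xs \<and> distinct xs"
proof -
  have "distinct (insert_at x p xs) \<longleftrightarrow> distinct (x # take p xs @ drop p xs)"
    unfolding insert_at_def by (auto simp: distinct_append simp del: append_take_drop_id)
  then show ?thesis by (simp only: append_take_drop_id distinct.simps)
qed

lemma insert_at_inject:
  assumes "x \<notin> set xs" "x \<notin> set ys" "p \<le> length xs" "q \<le> length ys"
    and "insert_at x p xs = insert_at x q ys"
  shows "p = q \<and> xs = ys"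
proof -
  have "x \<notin> set (take p xs)" "x \<notin> set (drop p xs)"
    using assms(1) by (auto dest: in_set_takeD in_set_dropD)
  then have "take p xs = take q ys \<and> drop p xs = drop q ys"
    using assms(5) append_Cons_eq_iff unfolding insert_at_def by metis
  then show ?thesis
    using assms(3,4) by (metis append_take_drop_id length_take min_absorb2)
qed

lemma avoids_321_insert_max:
  assumes "\<forall>y\<in>set us \<union> set vs. y < m"
  shows "avoids_321 (us @ m # vs) \<longleftrightarrow> avoids_321 (us @ vs) \<and> sorted vs"
  using assms
proof (induction us)
  case Nil
  then have "filter (\<lambda>y. y < m) vs = vs" by (auto simp: filter_id_conv)
  then show ?case by simp
next
  case (Cons u us)
  then have "filter (\<lambda>y. y < u) (us @ m # vs) = filter (\<lambda>y. y < u) (us @ vs)" by auto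
  then show ?case using Cons by auto
qed

lemma sorted_drop_insert_max:
  assumes "\<forall>y\<in>set us \<union> set vs. y < m" "sorted vs"
  shows "sorted (drop j (us @ m # vs)) \<longleftrightarrow>
    (if vs = [] then sorted (drop j us) else length us < j)"
proof (cases "j \<le> length us")
  case True
  then have drop: "drop j (us @ m # vs) = drop j us @ m # vs" by simp
  show ?thesis
  proof (cases "vs = []")
    case True
    then show ?thesis
      using drop assms(1) by (auto simp: sorted_append dest: in_set_dropD intro: less_imp_le)
  next
    case False
    then obtain v where "v \<in> set vs" by (cases vs) auto
    then show ?thesis using drop assms(1) False True by (auto simp: sorted_append not_le)
  qed
next
  case False
  then have "drop j (us @ m # vs) = drop (j - length us - 1) vs" by (simp add: drop_Cons')
  then show ?thesis using False assms(2) by (auto simp: sorted_wrt_drop)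
qed

lemma Av321_entries_less_Suc:
  assumes "xs \<in> Av321 n"
  shows "\<forall>y\<in>set (take p xs) \<union> set (drop p xs). y < Suc n"
proof -
  have "set (take p xs) \<union> set (drop p xs) = set xs" by (metis set_append append_take_drop_id)
  then show ?thesis using assms by (auto simp: mem_Av321)
qed

lemma bij_betw_insert_max:
  "bij_betw (\<lambda>(p, xs). insert_at (Suc n) p xs)
     (SIGMA p:{..n}. {xs \<in> Av321 n. sorted (drop p xs)}) (Av321 (Suc n))"
proof (rule bij_betwI')
  fix x y
  assume "x \<in> (SIGMA p:{..n}. {xs \<in> Av321 n. sorted (drop p xs)})"
    and "y \<in> (SIGMA p:{..n}. {xs \<in> Av321 n. sorted (drop p xs)})"
  then obtain p xs q ys where x: "x = (p, xs)" "p \<le> n" "xs \<in> Av321 n"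
    and y: "y = (q, ys)" "q \<le> n" "ys \<in> Av321 n" by blast
  have "Suc n \<notin> set xs" "Suc n \<notin> set ys" using x(3) y(3) by (auto simp: mem_Av321)
  then show "((\<lambda>(p, xs). insert_at (Suc n) p xs) x = (\<lambda>(p, xs). insert_at (Suc n) p xs) y) = (x = y)"
    using insert_at_inject[of "Suc n" xs ys p q] length_Av321 x y by auto
next
  fix x
  assume "x \<in> (SIGMA p:{..n}. {xs \<in> Av321 n. sorted (drop p xs)})"
  then obtain p xs where x: "x = (p, xs)" "xs \<in> Av321 n" "sorted (drop p xs)" by blast
  have "avoids_321 (insert_at (Suc n) p xs)"
    using avoids_321_insert_max[OF Av321_entries_less_Suc[OF x(2)]] x
    unfolding insert_at_def by (simp add: mem_Av321)
  moreover have "set (insert_at (Suc n) p xs) = {1..Suc n}"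
    using x(2) by (auto simp: set_insert_at mem_Av321)
  ultimately show "(\<lambda>(p, xs). insert_at (Suc n) p xs) x \<in> Av321 (Suc n)"
    using x(1,2) by (auto simp: mem_Av321 distinct_insert_at)
next
  fix ys
  assume ys: "ys \<in> Av321 (Suc n)"
  then have "Suc n \<in> set ys" by (simp add: mem_Av321)
  then obtain us vs where ys_eq: "ys = us @ Suc n # vs" by (meson split_list)
  have dist_uv: "distinct (us @ vs)" and notin: "Suc n \<notin> set (us @ vs)"
    using ys ys_eq by (auto simp: mem_Av321)
  have "insert (Suc n) (set (us @ vs)) = {1..Suc n}" using ys ys_eq by (auto simp: mem_Av321)
  then have set_uv: "set (us @ vs) = {1..n}"
    using notin by (simp add: atLeastAtMostSuc_conv insert_ident)
  then have "\<forall>y\<in>set us \<union> set vs. y < Suc n" by auto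
  from avoids_321_insert_max[OF this] have "avoids_321 (us @ vs)" "sorted vs"
    using ys ys_eq by (simp_all add: mem_Av321)
  then have "us @ vs \<in> Av321 n" using set_uv dist_uv by (simp add: mem_Av321)
  then have "(length us, us @ vs) \<in> (SIGMA p:{..n}. {xs \<in> Av321 n. sorted (drop p xs)})"
    using length_Av321 \<open>sorted vs\<close> by fastforce
  moreover have "ys = (\<lambda>(p, xs). insert_at (Suc n) p xs) (length us, us @ vs)"
    using ys_eq by (simp add: insert_at_def)
  ultimately show "\<exists>x\<in>(SIGMA p:{..n}. {xs \<in> Av321 n. sorted (drop p xs)}).
      ys = (\<lambda>(p, xs). insert_at (Suc n) p xs) x" by blast
qed

lemma sorted_drop_insert_max_Av321:
  assumes "xs \<in> Av321 n" "p \<le> n" "sorted (drop p xs)"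
  shows "sorted (drop j (insert_at (Suc n) p xs)) \<longleftrightarrow> (if p = n then sorted (drop j xs) else p < j)"
  using sorted_drop_insert_max[OF Av321_entries_less_Suc[OF assms(1)] assms(3), of j]
    length_Av321[OF assms(1)] assms(2)
  unfolding insert_at_def by auto

lemma card_Av321_sorted_from_Suc_eq_sum:
  "card (Av321_sorted_from (Suc n) j) =
    (\<Sum>p\<le>n. card {xs \<in> Av321 n. sorted (drop p xs) \<and> sorted (drop j (insert_at (Suc n) p xs))})"
proof -
  let ?ins = "\<lambda>(p, xs). insert_at (Suc n) p xs"
  define S where "S = (SIGMA p:{..n}. {xs \<in> Av321 n. sorted (drop p xs)})"
  define B where "B p = {xs \<in> Av321 n. sorted (drop p xs) \<and> sorted (drop j (insert_at (Suc n) p xs))}"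
    for p
  have bij: "bij_betw ?ins S (Av321 (Suc n))"
    unfolding S_def by (rule bij_betw_insert_max)
  have "Av321_sorted_from (Suc n) j = {ys \<in> ?ins ` S. sorted (drop j ys)}"
    using bij_betw_imp_surj_on[OF bij] by (simp only: Av321_sorted_from_def)
  also have "\<dots> = ?ins ` {z \<in> S. sorted (drop j (?ins z))}" by blast
  also have "{z \<in> S. sorted (drop j (?ins z))} = (SIGMA p:{..n}. B p)"
    unfolding S_def B_def by auto
  finally have "Av321_sorted_from (Suc n) j = ?ins ` (SIGMA p:{..n}. B p)" .
  moreover have "inj_on ?ins (SIGMA p:{..n}. B p)"
    using bij_betw_imp_inj_on[OF bij] unfolding S_def B_def by (rule inj_on_subset) auto
  moreover have "finite (B p)" for p
    unfolding B_def using finite_Av321 by simp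
  ultimately show ?thesis unfolding B_def by (simp add: card_image)
qed

lemma card_Av321_sorted_from_Suc:
  assumes "j \<le> n"
  shows "card (Av321_sorted_from (Suc n) j) = (\<Sum>p\<le>j. card (Av321_sorted_from n p))"
proof -
  define B where "B p = {xs \<in> Av321 n. sorted (drop p xs) \<and> sorted (drop j (insert_at (Suc n) p xs))}"
    for p
  have "card (Av321_sorted_from (Suc n) j) = (\<Sum>p<n. card (B p)) + card (B n)"
    unfolding card_Av321_sorted_from_Suc_eq_sum B_def by (simp add: lessThan_Suc_atMost[symmetric])
  also have "(\<Sum>p<n. card (B p)) = (\<Sum>p<j. card (Av321_sorted_from n p))"
  proof (rule sum.mono_neutral_cong_right)
    show "\<forall>p\<in>{..<n} - {..<j}. card (B p) = 0"
    proof
      fix p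
      assume "p \<in> {..<n} - {..<j}"
      then have "B p = {}" using sorted_drop_insert_max_Av321[of _ n p j] by (auto simp: B_def)
      then show "card (B p) = 0" by simp
    qed
    show "card (B p) = card (Av321_sorted_from n p)" if "p \<in> {..<j}" for p
      using that assms sorted_drop_insert_max_Av321[of _ n p j]
      unfolding B_def Av321_sorted_from_def by (intro arg_cong[of _ _ card]) auto
  qed (use assms in auto)
  also have "B n = Av321_sorted_from n j"
    using sorted_drop_insert_max_Av321[of _ n n j] length_Av321
    unfolding B_def Av321_sorted_from_def by auto
  finally show ?thesis by (simp add: lessThan_Suc_atMost[symmetric])
qed

definition catalan_triangle :: "nat \<Rightarrow> nat \<Rightarrow> int" where
  "catalan_triangle n j = int ((n + j) choose n) - int ((n + j) choose Suc n)"

lemma sum_catalan_triangle: "(\<Sum>p\<le>j. catalan_triangle n p) = catalan_triangle (Suc n) j"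
proof (induction j)
  case 0
  then show ?case by (simp add: catalan_triangle_def)
next
  case (Suc j)
  define N where "N = Suc (n + j)"
  have "Suc n + Suc j = Suc N" "n + Suc j = N" "Suc n + j = N" by (simp_all add: N_def)
  moreover have "Suc N choose Suc n = (N choose n) + (N choose Suc n)"
    "Suc N choose Suc (Suc n) = (N choose Suc n) + (N choose Suc (Suc n))" by simp_all
  ultimately have "catalan_triangle (Suc n) j + catalan_triangle n (Suc j) =
      catalan_triangle (Suc n) (Suc j)"
    unfolding catalan_triangle_def by simp
  then show ?case using Suc by simp
qed

lemma catalan_triangle_diagonal: "catalan_triangle (Suc n) (Suc n) = catalan_triangle (Suc n) n"
proof -
  define N where "N = Suc (2 * n)"
  have "Suc n + n = N" "Suc n + Suc n = Suc N" by (simp_all add: N_def)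
  moreover have "Suc N choose Suc n = (N choose n) + (N choose Suc n)"
    "Suc N choose Suc (Suc n) = (N choose Suc n) + (N choose Suc (Suc n))" by simp_all
  moreover have "N choose n = N choose Suc n"
    using binomial_symmetric[of n N] by (simp add: N_def)
  ultimately show ?thesis unfolding catalan_triangle_def by simp
qed

lemma card_Av321_sorted_from:
  "j \<le> n \<Longrightarrow> int (card (Av321_sorted_from n j)) = catalan_triangle n j"
proof (induction n arbitrary: j)
  case 0
  have "Av321 0 = {[]}"
  proof
    show "Av321 0 \<subseteq> {[]}" using length_Av321[of _ 0] by blast
    show "{[]} \<subseteq> Av321 0" by (simp add: mem_Av321)
  qed
  then have "Av321_sorted_from 0 j = {[]}" using Av321_sorted_from_eq_Av321[of 0 j] by simp
  then show ?case using "0" by (simp add: catalan_triangle_def)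
next
  case (Suc n)
  have below: "int (card (Av321_sorted_from (Suc n) i)) = catalan_triangle (Suc n) i"
    if "i \<le> n" for i
  proof -
    have "int (card (Av321_sorted_from (Suc n) i)) = (\<Sum>p\<le>i. int (card (Av321_sorted_from n p)))"
      using card_Av321_sorted_from_Suc[OF that] by simp
    also have "\<dots> = (\<Sum>p\<le>i. catalan_triangle n p)"
      using Suc.IH that by (intro sum.cong) auto
    finally show ?thesis by (simp add: sum_catalan_triangle)
  qed
  show ?case
  proof (cases "j \<le> n")
    case True
    then show ?thesis by (rule below)
  next
    case False
    then have "j = Suc n" using Suc.prems by simp
    moreover have "Av321_sorted_from (Suc n) (Suc n) = Av321_sorted_from (Suc n) n"
      using Av321_sorted_from_eq_Av321[of "Suc n" n] Av321_sorted_from_eq_Av321[of "Suc n" "Suc n"]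
      by simp
    ultimately show ?thesis using below[of n] catalan_triangle_diagonal by simp
  qed
qed

lemma Suc_times_binomial_central: "Suc n * (2 * n choose Suc n) = n * (2 * n choose n)"
proof (cases n)
  case 0
  then show ?thesis by simp
next
  case (Suc m)
  then have "2 * n = Suc (Suc m + m)" by simp
  then show ?thesis unfolding Suc by (simp only: Suc_times_binomial_add)
qed

lemma catalan_eq_binomial_diff: "catalan n = real (2 * n choose n) - real (2 * n choose Suc n)"
proof -
  have "real (Suc n * (2 * n choose Suc n)) = real (n * (2 * n choose n))"
    by (simp only: Suc_times_binomial_central)
  then have "real (Suc n) * real (2 * n choose Suc n) = real n * real (2 * n choose n)"
    by (simp only: of_nat_mult)
  then show ?thesis unfolding catalan_def by (simp add: field_simps)
qed

lemma card_Av321: "real (card (Av321 n)) = catalan n"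
proof -
  have "int (card (Av321 n)) = catalan_triangle n n"
    using card_Av321_sorted_from[of n n] Av321_sorted_from_eq_Av321[of n n] by simp
  then have "real_of_int (int (card (Av321 n))) = real_of_int (catalan_triangle n n)"
    by (rule arg_cong)
  then show ?thesis by (simp add: catalan_triangle_def catalan_eq_binomial_diff mult_2)
qed

lemma descent_preceded_by_ascent:
  assumes "\<not> has_321 xs" "distinct xs" "xs ! 0 < xs ! 1"
    and "Suc j < length xs" "xs ! Suc j < xs ! j"
  shows "0 < j \<and> xs ! (j - 1) < xs ! j"
proof -
  obtain k where k: "j = Suc k" using assms(3,5) by (cases j) auto
  have "xs ! k \<noteq> xs ! j" using assms(2,4) k by (simp add: nth_eq_iff_index_eq)
  moreover have "\<not> xs ! j < xs ! k"
  proof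
    assume "xs ! j < xs ! k"
    then have "has_321 xs" unfolding has_321_def using assms(4,5) k
      by (intro exI[of _ k] exI[of _ j] exI[of _ "Suc j"]) auto
    with assms(1) show False ..
  qed
  ultimately show ?thesis using k by simp
qed

lemma distinct_nth_0_neq_nth_1:
  assumes "distinct xs" "2 \<le> length xs"
  shows "xs ! 0 \<noteq> xs ! 1"
proof -
  have "0 < length xs" "1 < length xs" using assms(2) by linarith+
  then show ?thesis using nth_eq_iff_index_eq[OF assms(1)] by simp
qed

lemma ballot_iff_initial_ascent:
  assumes "distinct xs" "\<not> has_321 xs" "2 \<le> length xs"
  shows "ballot xs \<longleftrightarrow> xs ! 0 < xs ! 1"
proof
  assume "ballot xs"
  then have ballot_2: "des_pref xs 2 \<le> asc_pref xs 2" using assms(3) unfolding ballot_def by simp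
  have distinct_01: "xs ! 0 \<noteq> xs ! 1" using distinct_nth_0_neq_nth_1 assms(1,3) .
  show "xs ! 0 < xs ! 1"
  proof (rule ccontr)
    assume "\<not> xs ! 0 < xs ! 1"
    then have "xs ! 1 < xs ! 0" using distinct_01 by simp
    then have "{j. j + 1 < 2 \<and> xs ! j > xs ! (j + 1)} = {0}"
      and "{j. j + 1 < 2 \<and> xs ! j < xs ! (j + 1)} = {}" by auto
    then have "des_pref xs 2 = 1" "asc_pref xs 2 = 0" by (simp_all add: des_pref_def asc_pref_def)
    with ballot_2 show False by simp
  qed
next
  assume initial_ascent: "xs ! 0 < xs ! 1"
  show "ballot xs"
    unfolding ballot_def
  proof (intro allI impI)
    fix i
    let ?D = "{j. j + 1 < i \<and> xs ! j > xs ! (j + 1)}"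
    let ?A = "{j. j + 1 < i \<and> xs ! j < xs ! (j + 1)}"
    assume "1 \<le> i \<and> i \<le> length xs"
    then have ascent_before: "0 < j \<and> xs ! (j - 1) < xs ! j" if "j \<in> ?D" for j
      using that descent_preceded_by_ascent[OF assms(2,1) initial_ascent, of j] by auto
    have "card ?D \<le> card ?A"
    proof (rule card_inj_on_le[where f = "\<lambda>j. j - 1"])
      show "inj_on (\<lambda>j. j - 1) ?D"
        using ascent_before by (intro inj_on_diff_nat) (simp add: Suc_le_eq)
      show "(\<lambda>j. j - 1) ` ?D \<subseteq> ?A"
        using ascent_before by force
      show "finite ?A" by (rule finite_subset[of _ "{..<i}"]) auto
    qed
    then show "des_pref xs i \<le> asc_pref xs i" unfolding des_pref_def asc_pref_def .
  qed
qed

lemma avoids_321_map_Suc: "avoids_321 (map Suc xs) \<longleftrightarrow> avoids_321 xs"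
proof (induction xs)
  case (Cons x xs)
  have "filter (\<lambda>y. y < Suc x) (map Suc xs) = map Suc (filter (\<lambda>y. y < x) xs)"
    by (induction xs) auto
  then show ?case using Cons by (simp add: sorted_map)
qed simp

lemma avoids_321_insert_one_second:
  "avoids_321 (Suc b # 1 # map Suc ws) \<longleftrightarrow> avoids_321 (b # ws)"
proof -
  have "filter (\<lambda>y. y < Suc 0) (map Suc ws) = []" by (induction ws) auto
  moreover have "filter (\<lambda>y. y < Suc b) (map Suc ws) = map Suc (filter (\<lambda>y. y < b) ws)"
    by (induction ws) auto
  moreover have "\<forall>y\<in>set (map Suc (filter (\<lambda>y. y < b) ws)). 1 \<le> y" by auto
  ultimately show ?thesis using avoids_321_map_Suc[of ws] by (auto simp: sorted_map)
qed

lemma second_entry_eq_one: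
  assumes "a # c # zs \<in> Av321 n" "c < a"
  shows "c = 1"
proof (rule ccontr)
  assume "c \<noteq> 1"
  have entries: "set (a # c # zs) = {1..n}" and avoids: "avoids_321 (a # c # zs)"
    using assms(1) by (simp_all add: mem_Av321)
  then have "1 \<le> c" "c \<le> n" by auto
  then have "1 \<in> set (a # c # zs)" using entries by simp
  then have "1 \<in> set (filter (\<lambda>y. y < a) zs)" using assms(2) \<open>1 \<le> c\<close> \<open>c \<noteq> 1\<close> by auto
  moreover have "sorted (c # filter (\<lambda>y. y < a) zs)" using avoids assms(2) by simp
  ultimately have "c \<le> 1" by simp
  then show False using \<open>1 \<le> c\<close> \<open>c \<noteq> 1\<close> by simp
qed

lemma bij_betw_insert_one_second:
  assumes "1 \<le> m"
  shows "bij_betw (\<lambda>xs. insert_at 1 1 (map Suc xs)) (Av321 m) {ys \<in> Av321 (Suc m). ys ! 1 < ys ! 0}"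
proof (rule bij_betwI')
  fix xs ys
  assume "xs \<in> Av321 m" "ys \<in> Av321 m"
  then have "1 \<notin> set (map Suc xs)" "1 \<notin> set (map Suc ys)"
    and "1 \<le> length (map Suc xs)" "1 \<le> length (map Suc ys)"
    using length_Av321 assms by (auto simp: mem_Av321)
  then show "(insert_at 1 1 (map Suc xs) = insert_at 1 1 (map Suc ys)) = (xs = ys)"
    using insert_at_inject[of 1 "map Suc xs" "map Suc ys" 1 1] by auto
next
  fix xs
  assume xs: "xs \<in> Av321 m"
  then obtain b ws where b_ws: "xs = b # ws" using length_Av321[OF xs] assms by (cases xs) auto
  have "0 \<notin> set xs" using xs by (auto simp: mem_Av321)
  then have "distinct (insert_at 1 1 (map Suc xs))" using xs by (auto simp: distinct_insert_at distinct_map mem_Av321)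
  moreover have "set (insert_at 1 1 (map Suc xs)) = {1..Suc m}"
    using xs by (auto simp: set_insert_at mem_Av321 image_Suc_atLeastAtMost)
  moreover have "insert_at 1 1 (map Suc xs) = Suc b # 1 # map Suc ws" using b_ws by (simp add: insert_at_def)
  ultimately show "insert_at 1 1 (map Suc xs) \<in> {ys \<in> Av321 (Suc m). ys ! 1 < ys ! 0}"
    using xs b_ws avoids_321_insert_one_second[of b ws] by (simp add: mem_Av321)
next
  fix ys
  assume ys: "ys \<in> {ys \<in> Av321 (Suc m). ys ! 1 < ys ! 0}"
  then obtain a c zs where ys_eq: "ys = a # c # zs"
    using length_Av321[of ys "Suc m"] assms by (cases ys; cases "tl ys") auto
  then have "c = 1" using ys second_entry_eq_one by auto
  have "0 \<notin> set (a # zs)" using ys ys_eq by (auto simp: mem_Av321)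
  define xs where "xs = map (\<lambda>z. z - 1) (a # zs)"
  have map_Suc_xs: "map Suc xs = a # zs"
    unfolding xs_def map_map
  proof (intro map_idI)
    fix y
    assume "y \<in> set (a # zs)"
    then have "y \<noteq> 0" using \<open>0 \<notin> set (a # zs)\<close> by metis
    then show "(Suc \<circ> (\<lambda>z. z - 1)) y = y" by simp
  qed
  have "distinct xs" using ys ys_eq map_Suc_xs distinct_map[of Suc xs] by (simp add: mem_Av321)
  moreover have "set xs = {1..m}"
  proof -
    have "Suc ` set xs = set (a # zs)" by (metis map_Suc_xs list.set_map)
    also have "\<dots> = {1..Suc m} - {1}" using ys ys_eq \<open>c = 1\<close> by (auto simp: mem_Av321)
    also have "\<dots> = {2..Suc m}" by auto
    finally have "Suc ` set xs = Suc ` {1..m}" by simp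
    then show ?thesis using inj_image_eq_iff[OF inj_Suc] by blast
  qed
  moreover have "avoids_321 xs"
  proof -
    obtain b ws where "xs = b # ws" unfolding xs_def by simp
    then have "Suc b # 1 # map Suc ws = ys" using map_Suc_xs ys_eq \<open>c = 1\<close> by simp
    then show ?thesis using ys avoids_321_insert_one_second[of b ws] \<open>xs = b # ws\<close>
      by (simp add: mem_Av321)
  qed
  ultimately have "xs \<in> Av321 m" by (simp add: mem_Av321)
  moreover have "ys = insert_at 1 1 (map Suc xs)" using map_Suc_xs ys_eq \<open>c = 1\<close> by (simp add: insert_at_def)
  ultimately show "\<exists>xs\<in>Av321 m. ys = insert_at 1 1 (map Suc xs)" by blast
qed

lemma ballot_avoiding_321_eq:
  assumes "2 \<le> n"
  shows "ballot_avoiding n [3, 2, 1] = {xs \<in> Av321 n. xs ! 0 < xs ! 1}"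
proof -
  have "ballot xs \<longleftrightarrow> xs ! 0 < xs ! 1" if "xs \<in> Av321 n" for xs
    using ballot_iff_initial_ascent[of xs] that length_Av321[OF that] assms
    by (simp add: mem_Av321 avoids_321_iff_not_has_321)
  then show ?thesis
    unfolding ballot_avoiding_def avoids_def contains_321_iff_has_321
    by (auto simp: Av321_def avoids_321_iff_not_has_321)
qed

lemma card_ballot_avoiding_321:
  assumes "2 \<le> n"
  shows "real (card (ballot_avoiding n [3, 2, 1])) = catalan n - catalan (n - 1)"
proof -
  obtain m where n: "n = Suc m" and "1 \<le> m" using assms by (cases n) auto
  let ?asc = "{xs \<in> Av321 n. xs ! 0 < xs ! 1}"
  let ?desc = "{xs \<in> Av321 n. xs ! 1 < xs ! 0}"
  have "xs ! 0 \<noteq> xs ! 1" if "xs \<in> Av321 n" for xs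
    using distinct_nth_0_neq_nth_1[of xs] that assms length_Av321[OF that] by (simp add: mem_Av321)
  then have "Av321 n = ?asc \<union> ?desc" by (auto simp: neq_iff)
  then have "card (Av321 n) = card (?asc \<union> ?desc)" by (rule arg_cong)
  also have "\<dots> = card ?asc + card ?desc"
    using finite_Av321 by (intro card_Un_disjoint) auto
  finally have "card (Av321 n) = card ?asc + card ?desc" .
  moreover have "card ?desc = card (Av321 m)"
    using bij_betw_same_card[OF bij_betw_insert_one_second[OF \<open>1 \<le> m\<close>]] n by simp
  ultimately have "real (card ?asc) = real (card (Av321 n)) - real (card (Av321 m))" by simp
  then show ?thesis using ballot_avoiding_321_eq[OF assms] card_Av321 n by simp
qed

lemma catalan_fact: "catalan n = fact (2 * n) / (fact n * fact n * real (n + 1))"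
  using binomial_fact[of n "2 * n", where 'a = real] by (simp add: catalan_def)

lemma catalan_Suc: "real (n + 2) * catalan (Suc n) = 2 * (2 * real n + 1) * catalan n"
proof -
  have "fact (2 * Suc n) = (2 * real n + 2) * (2 * real n + 1) * fact (2 * n)"
    by (simp add: algebra_simps)
  moreover have "fact (Suc n) = (real n + 1) * fact n" by simp
  ultimately show ?thesis
    unfolding catalan_fact by (simp add: divide_simps) (simp add: algebra_simps)
qed

lemma binomial_eq_times_catalan: "real (2 * Suc n choose n) = real (Suc n) * catalan (Suc n)"
proof -
  have "real (2 * Suc n choose n) = fact (2 * Suc n) / (fact n * fact (n + 2))"
    using binomial_fact[of n "2 * Suc n", where 'a = real] by (simp add: numeral_eq_Suc)
  moreover have "fact (n + 2) = (real n + 2) * fact (Suc n)" by (simp add: numeral_eq_Suc)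
  moreover have "fact (Suc n) = (real n + 1) * fact n" by simp
  ultimately show ?thesis
    unfolding catalan_fact by (simp add: divide_simps) (simp add: algebra_simps)
qed

lemma catalan_diff_eq_binomial:
  assumes "2 \<le> n"
  shows "catalan n - catalan (n - 1) = 3 / real (n + 1) * real ((2 * n - 2) choose (n - 2))"
proof -
  obtain m where n: "n = Suc (Suc m)" using assms by (metis add_2_eq_Suc le_Suc_ex)
  have "real (m + 3) * catalan (Suc (Suc m)) = 2 * (2 * real m + 3) * catalan (Suc m)"
    using catalan_Suc[of "Suc m"] by (simp add: algebra_simps)
  moreover have "real ((2 * n - 2) choose (n - 2)) = real (m + 1) * catalan (Suc m)"
    using binomial_eq_times_catalan[of m] by (simp add: n)
  ultimately show ?thesis by (simp add: n field_simps)
qed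

theorem theorem4p1:
  fixes n :: nat
  assumes "n \<ge> 2"
  shows "real (card (ballot_avoiding n [3, 2, 1])) = catalan n - catalan (n - 1)
       \<and> catalan n - catalan (n - 1) = 3 / real (n + 1) * real ((2 * n - 2) choose (n - 2))"
  using card_ballot_avoiding_321[OF assms] catalan_diff_eq_binomial[OF assms] by simp

end
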